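(* Let $T$ be a complete o-minimal theory expanding the theory of real closed ordered fields. Let $(\mathbb{U},\mathcal{O}')\models T_{\mathrm{convex}}$, let $\mathbb{E}\preceq\mathbb{E}_1\prec\mathbb{U}$ with $\mathbb{E}\not\subseteq\mathcal{O}'$, and let $x\in\mathbb{U}\setminus\mathbb{E}$. Set $\mathcal{O}:=\mathcal{O}'\cap\mathbb{E}$ and $\mathcal{O}_1:=\mathcal{O}'\cap\mathbb{E}_1$. Suppose that no element of $\mathbb{E}_1$ realizes $\mathrm{tp}(x/\mathbb{E})$ (the type in the sense of $T$). Then $x$ is weakly immediate over $(\mathbb{E},\mathcal{O})$ if and only if it is weakly immediate over $(\mathbb{E}_1,\mathcal{O}_1)$. If this is the case, then $\mathrm{tp}(x/(\mathbb{E},\mathcal{O}))$ and $\mathrm{tp}(x/(\mathbb{E}_1,\mathcal{O}_1))$ have the same cofinality.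
   Context: $T_{\mathrm{convex}}$ is the theory of pairs $(\mathbb{U},\mathcal{O}')$ with $\mathbb{U}\models T$ and $\mathcal{O}'\ne\mathbb{U}$ a convex subring closed under all continuous $\emptyset$-definable functions. For $\mathbb{F}\preceq\mathbb{U}$, $x$ is weakly immediate over $(\mathbb{F},\mathcal{O}'\cap\mathbb{F})$ if $\{\mathrm{val}_{\mathcal{O}'}(x-c):c\in\mathbb{F}\}$ has no maximum; the cofinality of its type is the cofinality of this ordered set. *)

theory Defs
  imports "HOL-Computational_Algebra.Polynomial" "HOL-Library.Equipollence"
begin

text \<open>Terms and formulas over a signature with function symbols 'f and relation
symbols 'r (each symbol may be used at any arity; its interpretation is a function
on lists). Variables are natural numbers.\<close>

datatype 'f trm = Var nat | Fn 'f "'f trm list"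

datatype ('f, 'r) fm =
    Eq "'f trm" "'f trm"
  | Rel 'r "'f trm list"
  | Neg "('f, 'r) fm"
  | Conj "('f, 'r) fm" "('f, 'r) fm"
  | Ex nat "('f, 'r) fm"

fun evt :: "('f \<Rightarrow> 'a list \<Rightarrow> 'a) \<Rightarrow> (nat \<Rightarrow> 'a) \<Rightarrow> 'f trm \<Rightarrow> 'a" where
  "evt F \<sigma> (Var n) = \<sigma> n"
| "evt F \<sigma> (Fn f ts) = F f (map (evt F \<sigma>) ts)"

fun sat :: "'a set \<Rightarrow> ('f \<Rightarrow> 'a list \<Rightarrow> 'a) \<Rightarrow> ('r \<Rightarrow> 'a list \<Rightarrow> bool)
             \<Rightarrow> ('f, 'r) fm \<Rightarrow> (nat \<Rightarrow> 'a) \<Rightarrow> bool" where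
  "sat D F R (Eq s t) \<sigma> = (evt F \<sigma> s = evt F \<sigma> t)"
| "sat D F R (Rel r ts) \<sigma> = R r (map (evt F \<sigma>) ts)"
| "sat D F R (Neg \<phi>) \<sigma> = (\<not> sat D F R \<phi> \<sigma>)"
| "sat D F R (Conj \<phi> \<psi>) \<sigma> = (sat D F R \<phi> \<sigma> \<and> sat D F R \<psi> \<sigma>)"
| "sat D F R (Ex n \<phi>) \<sigma> = (\<exists>a\<in>D. sat D F R \<phi> (\<sigma>(n := a)))"

text \<open>E is (the domain of) an elementary substructure of the structure on UNIV.\<close>
definition elem_sub :: "('f \<Rightarrow> 'a list \<Rightarrow> 'a) \<Rightarrow> ('r \<Rightarrow> 'a list \<Rightarrow> bool) \<Rightarrow> 'a set \<Rightarrow> bool" where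
  "elem_sub F R E \<longleftrightarrow> E \<noteq> {} \<and> (\<forall>f xs. set xs \<subseteq> E \<longrightarrow> F f xs \<in> E) \<and>
     (\<forall>\<phi> \<sigma>. range \<sigma> \<subseteq> E \<longrightarrow> (sat E F R \<phi> \<sigma> \<longleftrightarrow> sat UNIV F R \<phi> \<sigma>))"

definition expands_orf :: "('f \<Rightarrow> ('a::linordered_field) list \<Rightarrow> 'a) \<Rightarrow> ('r \<Rightarrow> 'a list \<Rightarrow> bool) \<Rightarrow> bool" where
  "expands_orf F R \<longleftrightarrow> (\<exists>fp ft fn f0 f1 rl.
     (\<forall>a b. F fp [a, b] = a + b) \<and> (\<forall>a b. F ft [a, b] = a * b) \<and> (\<forall>a. F fn [a] = - a) \<and>
     F f0 [] = 0 \<and> F f1 [] = 1 \<and> (\<forall>a b. R rl [a, b] \<longleftrightarrow> a < b))"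

definition real_closed :: "'a::linordered_field itself \<Rightarrow> bool" where
  "real_closed _ \<longleftrightarrow> (\<forall>a::'a. a \<ge> 0 \<longrightarrow> (\<exists>b. b * b = a)) \<and>
     (\<forall>p::'a poly. odd (degree p) \<longrightarrow> (\<exists>b. poly p b = 0))"

definition is_interval :: "('a::linorder) set \<Rightarrow> bool" where
  "is_interval S \<longleftrightarrow> (\<exists>a b. a < b \<and> S = {a<..<b}) \<or> (\<exists>b. S = {..<b}) \<or> (\<exists>a. S = {a<..}) \<or> S = UNIV"

definition o_minimal :: "('f \<Rightarrow> ('a::linorder) list \<Rightarrow> 'a) \<Rightarrow> ('r \<Rightarrow> 'a list \<Rightarrow> bool) \<Rightarrow> bool" where
  "o_minimal F R \<longleftrightarrow> (\<forall>\<phi> \<sigma>. \<exists>C. finite C \<and> (\<forall>S\<in>C. is_interval S \<or> (\<exists>a. S = {a})) \<and>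
       {a. sat UNIV F R \<phi> (\<sigma>(0 := a))} = \<Union>C)"

text \<open>f (on n-tuples, given as lists of length n) is definable without parameters.\<close>
definition zero_definable_fun :: "('f \<Rightarrow> 'a list \<Rightarrow> 'a) \<Rightarrow> ('r \<Rightarrow> 'a list \<Rightarrow> bool) \<Rightarrow> nat \<Rightarrow> ('a list \<Rightarrow> 'a) \<Rightarrow> bool" where
  "zero_definable_fun F R n f \<longleftrightarrow> (\<exists>\<phi>. \<forall>\<sigma> xs y. length xs = n \<longrightarrow>
     (sat UNIV F R \<phi> (\<lambda>i. if i < n then xs ! i else if i = n then y else \<sigma> i) \<longleftrightarrow> f xs = y))"

definition cont_fun :: "nat \<Rightarrow> (('a::linordered_field) list \<Rightarrow> 'a) \<Rightarrow> bool" where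
  "cont_fun n f \<longleftrightarrow> (\<forall>xs. length xs = n \<longrightarrow> (\<forall>e>0. \<exists>d>0. \<forall>ys. length ys = n \<longrightarrow>
      (\<forall>i<n. \<bar>ys ! i - xs ! i\<bar> < d) \<longrightarrow> \<bar>f ys - f xs\<bar> < e))"

definition convex_subring :: "('a::linordered_field) set \<Rightarrow> bool" where
  "convex_subring Ov \<longleftrightarrow> 0 \<in> Ov \<and> 1 \<in> Ov \<and> (\<forall>a\<in>Ov. \<forall>b\<in>Ov. a + b \<in> Ov \<and> a - b \<in> Ov \<and> a * b \<in> Ov)
     \<and> (\<forall>a\<in>Ov. \<forall>b\<in>Ov. \<forall>c. a \<le> c \<and> c \<le> b \<longrightarrow> c \<in> Ov)"

definition T_convex :: "('f \<Rightarrow> ('a::linordered_field) list \<Rightarrow> 'a) \<Rightarrow> ('r \<Rightarrow> 'a list \<Rightarrow> bool) \<Rightarrow> 'a set \<Rightarrow> bool" where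
  "T_convex F R Ov \<longleftrightarrow> Ov \<noteq> UNIV \<and> convex_subring Ov \<and>
     (\<forall>n f. zero_definable_fun F R n f \<and> cont_fun n f \<longrightarrow>
        (\<forall>xs. length xs = n \<and> set xs \<subseteq> Ov \<longrightarrow> f xs \<in> Ov))"

definition realizes_type_in :: "('f \<Rightarrow> 'a list \<Rightarrow> 'a) \<Rightarrow> ('r \<Rightarrow> 'a list \<Rightarrow> bool) \<Rightarrow> 'a set \<Rightarrow> 'a set \<Rightarrow> 'a \<Rightarrow> bool" where
  "realizes_type_in F R E E1 x \<longleftrightarrow> (\<exists>y\<in>E1. \<forall>\<phi> \<sigma>. range \<sigma> \<subseteq> E \<longrightarrow>
      (sat UNIV F R \<phi> (\<sigma>(0 := x)) \<longleftrightarrow> sat UNIV F R \<phi> (\<sigma>(0 := y))))"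

text \<open>val_O(a) \<le> val_O(b).\<close>
definition val_le :: "('a::field) set \<Rightarrow> 'a \<Rightarrow> 'a \<Rightarrow> bool" where
  "val_le Ov a b \<longleftrightarrow> (if a = 0 then b = 0 else b / a \<in> Ov)"

text \<open>val_O(a), as the equivalence class of a.\<close>
definition val :: "('a::field) set \<Rightarrow> 'a \<Rightarrow> 'a set" where
  "val Ov a = {b. val_le Ov a b \<and> val_le Ov b a}"

definition val_ord :: "('a::field) set \<Rightarrow> 'a set \<Rightarrow> 'a set \<Rightarrow> bool" where
  "val_ord Ov v w \<longleftrightarrow> (\<exists>a b. v = val Ov a \<and> w = val Ov b \<and> val_le Ov a b)"

definition val_set :: "('a::field) set \<Rightarrow> 'a \<Rightarrow> 'a set \<Rightarrow> 'a set set" where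
  "val_set Ov x K = (\<lambda>c. val Ov (x - c)) ` K"

definition weakly_immediate :: "('a::field) set \<Rightarrow> 'a set \<Rightarrow> 'a \<Rightarrow> bool" where
  "weakly_immediate Ov K x \<longleftrightarrow> \<not> (\<exists>m\<in>val_set Ov x K. \<forall>v\<in>val_set Ov x K. val_ord Ov v m)"

definition cofinal_in :: "('b \<Rightarrow> 'b \<Rightarrow> bool) \<Rightarrow> 'b set \<Rightarrow> 'b set \<Rightarrow> bool" where
  "cofinal_in le S A \<longleftrightarrow> A \<subseteq> S \<and> (\<forall>s\<in>S. \<exists>a\<in>A. le s a)"

definition same_cofinality :: "('b \<Rightarrow> 'b \<Rightarrow> bool) \<Rightarrow> 'b set \<Rightarrow> ('c \<Rightarrow> 'c \<Rightarrow> bool) \<Rightarrow> 'c set \<Rightarrow> bool" where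
  "same_cofinality le1 S1 le2 S2 \<longleftrightarrow> (\<exists>A B. cofinal_in le1 S1 A \<and> cofinal_in le2 S2 B \<and>
      (\<forall>A'. cofinal_in le1 S1 A' \<longrightarrow> A \<lesssim> A') \<and> (\<forall>B'. cofinal_in le2 S2 B' \<longrightarrow> B \<lesssim> B') \<and>
      A \<approx> B)"

end

(* Since no element of E1 realizes tp(x/E), every c in E1 is separated from x by some e in E.
   Otherwise an E-definable set containing exactly one of c and x has, by o-minimality, a frontier
   point between them (the supremum of its initial run), while the frontier of an E-definable set
   is finite and E-definable, hence contained in E. For such e we have |x - e| <= |x - c|, so
   val(x - c) <= val(x - e): the values over E are cofinal among the values over E1, and a cofinal
   subset has a maximum iff the whole set has one, and the same cofinality. *)

theory Submission
  imports Defs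
begin

section \<open>Cofinal subsets\<close>

lemma ex_lepoll_minimal:
  assumes "P A0"
  shows "\<exists>A. P A \<and> (\<forall>A'. P A' \<longrightarrow> A \<lesssim> A')"
proof -
  define Q where "Q = {card_of A | A. P A}"
  have "card_of A0 \<in> Q" using assms unfolding Q_def by blast
  then obtain r where "r \<in> Q" and min: "\<And>r'. (r', r) \<in> ordLess \<Longrightarrow> r' \<notin> Q"
    using wfE_min[OF wf_ordLess, of "card_of A0" Q] by blast
  then obtain A where A: "P A" "r = card_of A" unfolding Q_def by blast
  have "A \<lesssim> A'" if "P A'" for A'
  proof -
    have "(card_of A', card_of A) \<notin> ordLess" using min A(2) that unfolding Q_def by blast
    then have "(card_of A, card_of A') \<in> ordLeq"
      using not_ordLeq_iff_ordLess[OF card_of_Well_order card_of_Well_order] by blast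
    then show ?thesis unfolding lepoll_def by (simp add: card_of_ordLeq[symmetric])
  qed
  with A(1) show ?thesis by blast
qed

lemma has_greatest_iff_of_cofinal:
  assumes tr: "transp le" and cof: "cofinal_in le S A"
  shows "(\<exists>m\<in>A. \<forall>v\<in>A. le v m) \<longleftrightarrow> (\<exists>m\<in>S. \<forall>v\<in>S. le v m)"
proof
  assume "\<exists>m\<in>A. \<forall>v\<in>A. le v m"
  then obtain m where m: "m \<in> A" "\<forall>v\<in>A. le v m" by blast
  have "le v m" if v: "v \<in> S" for v
  proof -
    obtain a where "a \<in> A" "le v a" using cof v unfolding cofinal_in_def by blast
    then show ?thesis using m transpD[OF tr, of v a m] by blast
  qed
  moreover have "m \<in> S" using m(1) cof unfolding cofinal_in_def by blast
  ultimately show "\<exists>m\<in>S. \<forall>v\<in>S. le v m" by blast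
next
  assume "\<exists>m\<in>S. \<forall>v\<in>S. le v m"
  then obtain m where m: "m \<in> S" "\<forall>v\<in>S. le v m" by blast
  then obtain m' where "m' \<in> A" "le m m'" using cof unfolding cofinal_in_def by blast
  moreover have "le v m'" if "v \<in> A" for v
  proof -
    have "le v m" using that m(2) cof unfolding cofinal_in_def by blast
    then show ?thesis using \<open>le m m'\<close> transpD[OF tr, of v m m'] by blast
  qed
  ultimately show "\<exists>m\<in>A. \<forall>v\<in>A. le v m" by blast
qed

lemma same_cofinality_of_cofinal:
  assumes refl: "reflp_on S le" and tr: "transp le" and cof: "cofinal_in le S A"
  shows "same_cofinality le A le S"
proof -
  have "cofinal_in le A A" "cofinal_in le S S"
    using reflp_onD[OF refl] cof unfolding cofinal_in_def by blast+
  then obtain A0 B0 where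
    A0: "cofinal_in le A A0" "\<And>A'. cofinal_in le A A' \<Longrightarrow> A0 \<lesssim> A'" and
    B0: "cofinal_in le S B0" "\<And>B'. cofinal_in le S B' \<Longrightarrow> B0 \<lesssim> B'"
    using ex_lepoll_minimal[of "cofinal_in le A"] ex_lepoll_minimal[of "cofinal_in le S"] by metis
  have "cofinal_in le S A0"
    unfolding cofinal_in_def
  proof (intro conjI ballI)
    show "A0 \<subseteq> S" using A0(1) cof unfolding cofinal_in_def by blast
    fix s assume "s \<in> S"
    then obtain a where "a \<in> A" "le s a" using cof unfolding cofinal_in_def by blast
    moreover obtain a0 where "a0 \<in> A0" "le a a0" using A0(1) \<open>a \<in> A\<close> unfolding cofinal_in_def by blast
    ultimately show "\<exists>a\<in>A0. le s a" using transpD[OF tr, of s a a0] by blast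
  qed
  then have "B0 \<lesssim> A0" using B0(2) by blast
  obtain g where g: "\<And>b. b \<in> B0 \<Longrightarrow> g b \<in> A \<and> le b (g b)"
    using B0(1) cof unfolding cofinal_in_def by (metis subsetD)
  have "cofinal_in le A (g ` B0)"
    unfolding cofinal_in_def
  proof (intro conjI ballI)
    show "g ` B0 \<subseteq> A" using g by blast
    fix s assume "s \<in> A"
    then obtain b where "b \<in> B0" "le s b" using B0(1) cof unfolding cofinal_in_def by blast
    then show "\<exists>a\<in>g ` B0. le s a" using g[of b] transpD[OF tr, of s b "g b"] by blast
  qed
  then have "A0 \<lesssim> B0"
    using A0(2) image_lepoll lepoll_trans by blast
  with \<open>B0 \<lesssim> A0\<close> show ?thesis
    unfolding same_cofinality_def using A0 B0 lepoll_antisym by blast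
qed

section \<open>Valuations of differences\<close>

lemma val_le_refl: "convex_subring Op \<Longrightarrow> val_le Op a a"
  unfolding val_le_def convex_subring_def by auto

lemma val_le_trans:
  fixes Op :: "'a::linordered_field set"
  assumes Op: "convex_subring Op" and ab: "val_le Op a b" and bc: "val_le Op b c"
  shows "val_le Op a c"
proof (cases "a = 0 \<or> b = 0")
  case True
  with ab bc show ?thesis unfolding val_le_def by auto
next
  case False
  then have "c / a = (c / b) * (b / a)" by simp
  moreover have "c / b \<in> Op" "b / a \<in> Op" using ab bc False unfolding val_le_def by auto
  ultimately show ?thesis using Op False unfolding val_le_def convex_subring_def by metis
qed

lemma val_le_of_val_eq:
  assumes "convex_subring Op" "val Op a = val Op b"
  shows "val_le Op a b \<and> val_le Op b a"
proof -
  have "b \<in> val Op b" unfolding val_def using val_le_refl[OF assms(1)] by blast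
  then show ?thesis using assms(2) unfolding val_def by blast
qed

lemma val_ord_val_iff:
  fixes Op :: "'a::linordered_field set"
  assumes Op: "convex_subring Op"
  shows "val_ord Op (val Op a) (val Op b) \<longleftrightarrow> val_le Op a b"
proof
  assume "val_ord Op (val Op a) (val Op b)"
  then obtain a' b' where "val Op a = val Op a'" "val Op b = val Op b'" "val_le Op a' b'"
    unfolding val_ord_def by blast
  then show "val_le Op a b" using val_le_of_val_eq[OF Op] val_le_trans[OF Op] by metis
qed (auto simp: val_ord_def)

lemma val_ord_trans:
  fixes Op :: "'a::linordered_field set"
  assumes Op: "convex_subring Op" and "val_ord Op u v" "val_ord Op v w"
  shows "val_ord Op u w"
proof -
  obtain a b b' c where "u = val Op a" "v = val Op b" "val_le Op a b"
    and "v = val Op b'" "w = val Op c" "val_le Op b' c"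
    using assms(2,3) unfolding val_ord_def by blast
  then show ?thesis
    using val_le_of_val_eq[OF Op] val_le_trans[OF Op] val_ord_val_iff[OF Op] by metis
qed

lemma val_le_sub_of_between:
  fixes Op :: "'a::linordered_field set"
  assumes Op: "convex_subring Op" and "c \<noteq> x" and "min c x \<le> e" "e \<le> max c x"
  shows "val_le Op (x - c) (x - e)"
proof -
  have "0 \<le> (x - e) / (x - c) \<and> (x - e) / (x - c) \<le> 1"
    using assms(2-4) by (auto simp: divide_simps min_def max_def split: if_splits)
  then have "(x - e) / (x - c) \<in> Op" using Op unfolding convex_subring_def by blast
  then show ?thesis using assms(2) unfolding val_le_def by auto
qed

lemma cofinal_val_set_of_between:
  fixes Op :: "'a::linordered_field set"
  assumes Op: "convex_subring Op" and "E \<subseteq> E1" and "x \<notin> E1"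
    and between: "\<And>c. c \<in> E1 \<Longrightarrow> \<exists>e\<in>E. min c x \<le> e \<and> e \<le> max c x"
  shows "cofinal_in (val_ord Op) (val_set Op x E1) (val_set Op x E)"
  unfolding cofinal_in_def
proof
  show "val_set Op x E \<subseteq> val_set Op x E1" using assms(2) unfolding val_set_def by blast
  show "\<forall>s\<in>val_set Op x E1. \<exists>s'\<in>val_set Op x E. val_ord Op s s'"
  proof
    fix s assume "s \<in> val_set Op x E1"
    then obtain c where c: "c \<in> E1" "s = val Op (x - c)" unfolding val_set_def by blast
    obtain e where "e \<in> E" "min c x \<le> e" "e \<le> max c x" using between c(1) by blast
    moreover have "c \<noteq> x" using c(1) assms(3) by blast
    ultimately have "val_le Op (x - c) (x - e)"
      using val_le_sub_of_between[OF Op] by blast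
    with c \<open>e \<in> E\<close> show "\<exists>s'\<in>val_set Op x E. val_ord Op s s'"
      unfolding val_set_def using val_ord_val_iff[OF Op] by blast
  qed
qed

lemma weakly_immediate_iff_and_same_cofinality_of_between:
  fixes Op :: "'a::linordered_field set"
  assumes Op: "convex_subring Op" and "E \<subseteq> E1" and "x \<notin> E1"
    and "\<And>c. c \<in> E1 \<Longrightarrow> \<exists>e\<in>E. min c x \<le> e \<and> e \<le> max c x"
  shows "(weakly_immediate Op E x \<longleftrightarrow> weakly_immediate Op E1 x) \<and>
    same_cofinality (val_ord Op) (val_set Op x E) (val_ord Op) (val_set Op x E1)"
proof -
  have cof: "cofinal_in (val_ord Op) (val_set Op x E1) (val_set Op x E)"
    using cofinal_val_set_of_between[OF assms] .
  have "reflp_on (val_set Op x E1) (val_ord Op)"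
    unfolding val_set_def using val_le_refl[OF Op] val_ord_val_iff[OF Op] by (auto intro: reflp_onI)
  moreover have tr: "transp (val_ord Op)"
    using val_ord_trans[OF Op] by (auto intro: transpI)
  ultimately show ?thesis
    using has_greatest_iff_of_cofinal[OF tr cof] same_cofinality_of_cofinal[OF _ tr cof]
    unfolding weakly_immediate_def by blast
qed

section \<open>Finite unions of intervals\<close>

definition is_lub :: "'a::linorder set \<Rightarrow> 'a \<Rightarrow> bool" where
  "is_lub S p \<longleftrightarrow> (\<forall>s\<in>S. s \<le> p) \<and> (\<forall>q. (\<forall>s\<in>S. s \<le> q) \<longrightarrow> p \<le> q)"

definition piece :: "'a::linorder set \<Rightarrow> bool" where
  "piece S \<longleftrightarrow> is_interval S \<or> (\<exists>a. S = {a})"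

definition order_interior :: "'a::linorder set \<Rightarrow> 'a set" where
  "order_interior S = {y. \<exists>l u. l < y \<and> y < u \<and> {l<..<u} \<subseteq> S}"

definition order_frontier :: "'a::linorder set \<Rightarrow> 'a set" where
  "order_frontier S = - (order_interior S \<union> order_interior (- S))"

lemma is_lubI:
  fixes p :: "'a::linorder"
  assumes "\<And>s. s \<in> S \<Longrightarrow> s \<le> p" and "\<And>q. q < p \<Longrightarrow> \<exists>s\<in>S. q < s"
  shows "is_lub S p"
  unfolding is_lub_def
proof (intro conjI allI impI ballI)
  show "s \<le> p" if "s \<in> S" for s using assms(1) that .
  fix q assume ub: "\<forall>s\<in>S. s \<le> q"
  show "p \<le> q"
  proof (rule ccontr)
    assume "\<not> p \<le> q"
    then obtain s where "s \<in> S" "q < s" using assms(2) by (auto simp: not_le)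
    then show False using ub by (auto simp: not_le[symmetric])
  qed
qed

lemma is_lub_Un:
  assumes "is_lub A p" "is_lub B q"
  shows "is_lub (A \<union> B) (max p q)"
proof (rule is_lubI)
  show "s \<le> max p q" if "s \<in> A \<union> B" for s
    using that assms unfolding is_lub_def by (auto simp: le_max_iff_disj)
  show "\<exists>s\<in>A \<union> B. r < s" if "r < max p q" for r
    using that assms unfolding is_lub_def by (auto simp: less_max_iff_disj not_le[symmetric])
qed

lemma piece_has_lub:
  fixes S :: "'a::linordered_field set"
  assumes "piece S" and bounded: "\<forall>s\<in>S. s \<le> b"
  shows "\<exists>p. is_lub S p"
  using assms(1) unfolding piece_def is_interval_def
proof (elim disjE exE conjE)
  fix a c :: 'a assume "a < c" "S = {a<..<c}"
  have "\<exists>s\<in>S. q < s" if "q < c" for q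
  proof -
    obtain s where "max a q < s" "s < c" using dense[of "max a q" c] \<open>a < c\<close> \<open>q < c\<close> by auto
    then show ?thesis using \<open>S = {a<..<c}\<close> by auto
  qed
  then have "is_lub S c" using \<open>S = {a<..<c}\<close> by (intro is_lubI) auto
  then show ?thesis ..
next
  fix c :: 'a assume "S = {..<c}"
  have "\<exists>s\<in>S. q < s" if "q < c" for q
    using dense[OF that] \<open>S = {..<c}\<close> by auto
  then have "is_lub S c" using \<open>S = {..<c}\<close> by (intro is_lubI) auto
  then show ?thesis ..
next
  fix a :: 'a assume "S = {a<..}"
  then have "max a b + 1 \<in> S" by (simp add: max_def)
  then have "max a b + 1 \<le> b" using bounded by blast
  then show ?thesis by (simp add: max_def split: if_splits)
next
  assume "S = UNIV"
  then have "b + 1 \<le> b" using bounded by blast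
  then show ?thesis by simp
next
  fix a :: 'a assume "S = {a}"
  then have "is_lub S a" by (intro is_lubI) auto
  then show ?thesis ..
qed

lemma Union_pieces_has_lub:
  fixes C :: "'a::linordered_field set set"
  assumes "finite C" "\<forall>S\<in>C. piece S" "\<Union>C \<noteq> {}" "\<forall>s\<in>\<Union>C. s \<le> b"
  shows "\<exists>p. is_lub (\<Union>C) p"
  using assms
proof (induction C rule: finite_induct)
  case (insert S C)
  then obtain p where "is_lub S p" using piece_has_lub[of S b] by blast
  show ?case
  proof (cases "\<Union>C = {}")
    case True
    then have "\<Union>(insert S C) = S" by auto
    then show ?thesis using \<open>is_lub S p\<close> by metis
  next
    case False
    then obtain q where "is_lub (\<Union>C) q" using insert by auto
    then show ?thesis using is_lub_Un[OF \<open>is_lub S p\<close>] by auto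
  qed
qed simp

lemma piece_locally_constant_right:
  fixes S :: "'a::linordered_field set"
  assumes "piece S"
  shows "\<exists>u>y. {y<..<u} \<subseteq> S \<or> {y<..<u} \<inter> S = {}"
proof -
  have inside: "?thesis" if "y < u" "{y<..<u} \<subseteq> S" for u using that by blast
  have outside: "?thesis" if "y < u" "{y<..<u} \<inter> S = {}" for u using that by blast
  show ?thesis
    using assms unfolding piece_def is_interval_def
  proof (elim disjE exE conjE)
    fix a c :: 'a assume S: "a < c" "S = {a<..<c}"
    consider "y < a" | "a \<le> y" "y < c" | "c \<le> y" by fastforce
    then show ?thesis
    proof cases
      case 1 then show ?thesis using S by (intro outside[of a]) auto
    next
      case 2 then show ?thesis using S by (intro inside[of c]) auto
    next
      case 3 then show ?thesis using S by (intro outside[of "y + 1"]) auto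
    qed
  next
    fix c :: 'a assume S: "S = {..<c}"
    show ?thesis
    proof (cases "y < c")
      case True then show ?thesis using S by (intro inside[of c]) auto
    next
      case False then show ?thesis using S by (intro outside[of "y + 1"]) auto
    qed
  next
    fix a :: 'a assume S: "S = {a<..}"
    show ?thesis
    proof (cases "y < a")
      case True then show ?thesis using S by (intro outside[of a]) auto
    next
      case False then show ?thesis using S by (intro inside[of "y + 1"]) auto
    qed
  next
    assume "S = UNIV" then show ?thesis by (intro inside[of "y + 1"]) auto
  next
    fix a :: 'a assume S: "S = {a}"
    show ?thesis
    proof (cases "y < a")
      case True then show ?thesis using S by (intro outside[of a]) auto
    next
      case False then show ?thesis using S by (intro outside[of "y + 1"]) auto
    qed
  qed
qed

lemma Union_pieces_locally_constant_right:
  fixes C :: "'a::linordered_field set set"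
  assumes "finite C" "\<forall>S\<in>C. piece S"
  shows "\<exists>u>y. {y<..<u} \<subseteq> \<Union>C \<or> {y<..<u} \<inter> \<Union>C = {}"
  using assms
proof (induction C rule: finite_induct)
  case empty then show ?case by (auto intro!: exI[of _ "y + 1"])
next
  case (insert S C)
  obtain u1 where "u1 > y" "{y<..<u1} \<subseteq> S \<or> {y<..<u1} \<inter> S = {}"
    using piece_locally_constant_right insert.prems by blast
  moreover obtain u2 where "u2 > y" "{y<..<u2} \<subseteq> \<Union>C \<or> {y<..<u2} \<inter> \<Union>C = {}"
    using insert.IH insert.prems by blast
  ultimately have "{y<..<min u1 u2} \<subseteq> \<Union>(insert S C) \<or> {y<..<min u1 u2} \<inter> \<Union>(insert S C) = {}"
    by auto
  then show ?case using \<open>u1 > y\<close> \<open>u2 > y\<close> by (intro exI[of _ "min u1 u2"]) auto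
qed

lemma is_interval_contains_open_interval:
  fixes S :: "'a::linordered_field set"
  assumes "is_interval S"
  obtains l u where "l < u" "{l<..<u} \<subseteq> S"
proof -
  have "\<exists>l u. l < u \<and> {l<..<u} \<subseteq> S"
    using assms unfolding is_interval_def
  proof (elim disjE exE conjE)
    fix a b :: 'a assume "a < b" "S = {a<..<b}"
    then show ?thesis by (intro exI[of _ a] exI[of _ b]) simp
  next
    fix b :: 'a assume "S = {..<b}"
    then show ?thesis by (intro exI[of _ "b - 1"] exI[of _ b]) auto
  next
    fix a :: 'a assume "S = {a<..}"
    then show ?thesis by (intro exI[of _ a] exI[of _ "a + 1"]) auto
  next
    assume "S = UNIV"
    then show ?thesis by (intro exI[of _ 0] exI[of _ 1]) auto
  qed
  with that show thesis by blast
qed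

lemma finite_Union_pieces_without_intervals:
  fixes C :: "'a::linordered_field set set"
  assumes "finite C" "\<forall>S\<in>C. piece S" and no_interval: "\<And>l u. l < u \<Longrightarrow> \<not> {l<..<u} \<subseteq> \<Union>C"
  shows "finite (\<Union>C)"
proof -
  have "\<not> is_interval S" if "S \<in> C" for S
  proof
    assume "is_interval S"
    then obtain l u where "l < u" "{l<..<u} \<subseteq> S" by (rule is_interval_contains_open_interval)
    then show False using no_interval \<open>S \<in> C\<close> by blast
  qed
  then show ?thesis using assms(1,2) unfolding piece_def by auto
qed

lemma order_frontier_without_intervals:
  fixes S :: "'a::linordered_field set"
  assumes loc: "\<exists>u>l. {l<..<u} \<subseteq> S \<or> {l<..<u} \<inter> S = {}" and "l < u"
  shows "\<not> {l<..<u} \<subseteq> order_frontier S"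
proof
  assume frontier: "{l<..<u} \<subseteq> order_frontier S"
  obtain u' where "l < u'" and const: "{l<..<u'} \<subseteq> S \<or> {l<..<u'} \<inter> S = {}"
    using loc by blast
  have "l < min u u'" using \<open>l < u\<close> \<open>l < u'\<close> by simp
  then obtain m where m: "l < m" "m < min u u'" using dense by blast
  moreover have "{l<..<min u u'} \<subseteq> {l<..<u'}" by auto
  ultimately have "m \<in> order_interior S \<or> m \<in> order_interior (- S)"
    using const unfolding order_interior_def by blast
  then show False using frontier m unfolding order_frontier_def by auto
qed

lemma lub_of_initial_run_in_order_frontier:
  fixes S :: "'a::linordered_field set"
  assumes "a \<in> S" "b \<notin> S" "a < b" and lub: "is_lub {t. {a..t} \<subseteq> S} p"
  shows "a \<le> p" "p \<le> b" "p \<in> order_frontier S"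
proof -
  define L where "L = {t. {a..t} \<subseteq> S}"
  have down: "t' \<in> L" if "t' \<le> t" "t \<in> L" for t t'
    using that unfolding L_def by auto
  have "a \<in> L" using assms(1) unfolding L_def by auto
  have "b \<in> {a..b}" using assms(3) by simp
  then have "b \<notin> L" using assms(2) unfolding L_def by blast
  have below: "t \<in> L" if "t < p" for t
  proof (rule ccontr)
    assume "t \<notin> L"
    then have "\<forall>s\<in>L. s \<le> t" using down by (meson linear)
    then show False using lub that unfolding L_def is_lub_def by (meson not_le)
  qed
  have in_S: "s \<in> S" if "a \<le> s" "s < p" for s
  proof -
    have "{a..s} \<subseteq> S" using below[OF that(2)] unfolding L_def by blast
    then show ?thesis using that(1) by auto
  qed
  have above: "t \<notin> L" if "p < t" for t
    using lub that unfolding L_def is_lub_def by (meson not_le)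
  show "a \<le> p" using above \<open>a \<in> L\<close> by (meson not_le)
  show "p \<le> b" using below \<open>b \<notin> L\<close> by (meson not_le)
  have "p \<notin> order_interior S"
  proof
    assume "p \<in> order_interior S"
    then obtain l u where "l < p" "p < u" "{l<..<u} \<subseteq> S" unfolding order_interior_def by blast
    obtain t where "p < t" "t < u" using dense \<open>p < u\<close> by blast
    then have "\<not> {a..t} \<subseteq> S" using above unfolding L_def by blast
    then obtain s where "s \<in> {a..t}" "s \<notin> S" by blast
    then have s: "a \<le> s" "s \<le> t" "s \<notin> S" by auto
    show False
    proof (cases "s < p")
      case True
      then show False using in_S s by blast
    next
      case False
      then have "s \<in> {l<..<u}" using s \<open>l < p\<close> \<open>t < u\<close> by auto
      then show False using s \<open>{l<..<u} \<subseteq> S\<close> by blast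
    qed
  qed
  moreover have "p \<notin> order_interior (- S)"
  proof
    assume "p \<in> order_interior (- S)"
    then obtain l u where "l < p" "p < u" "{l<..<u} \<subseteq> - S" unfolding order_interior_def by blast
    then have "a \<noteq> p" using \<open>a \<in> S\<close> by auto
    then have "max l a < p" using \<open>a \<le> p\<close> \<open>l < p\<close> by simp
    then obtain s where "max l a < s" "s < p" using dense by blast
    then have "s \<in> S" using in_S by simp
    moreover have "s \<in> {l<..<u}" using \<open>max l a < s\<close> \<open>s < p\<close> \<open>p < u\<close> by auto
    ultimately show False using \<open>{l<..<u} \<subseteq> - S\<close> by auto
  qed
  ultimately show "p \<in> order_frontier S" unfolding order_frontier_def by blast
qed

section \<open>Definable sets in an o-minimal expansion\<close>

fun tvars :: "'f trm \<Rightarrow> nat set" where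
  "tvars (Var n) = {n}"
| "tvars (Fn f ts) = (\<Union>t\<in>set ts. tvars t)"

fun vars :: "('f, 'r) fm \<Rightarrow> nat set" where
  "vars (Eq s t) = tvars s \<union> tvars t"
| "vars (Rel r ts) = (\<Union>t\<in>set ts. tvars t)"
| "vars (Neg \<phi>) = vars \<phi>"
| "vars (Conj \<phi> \<psi>) = vars \<phi> \<union> vars \<psi>"
| "vars (Ex n \<phi>) = insert n (vars \<phi>)"

lemma finite_tvars: "finite (tvars t)"
  by (induction t) auto

lemma finite_vars: "finite (vars \<phi>)"
  by (induction \<phi>) (auto simp: finite_tvars)

lemma evt_cong: "(\<forall>i\<in>tvars t. \<sigma> i = \<tau> i) \<Longrightarrow> evt F \<sigma> t = evt F \<tau> t"
proof (induction t)
  case (Var n) then show ?case by simp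
next
  case (Fn f ts)
  have "\<forall>x\<in>set ts. evt F \<sigma> x = evt F \<tau> x" using Fn by auto
  then have "map (evt F \<sigma>) ts = map (evt F \<tau>) ts" by (simp only: map_eq_conv)
  then show ?case by (simp only: evt.simps)
qed

lemma sat_cong: "(\<forall>i\<in>vars \<phi>. \<sigma> i = \<tau> i) \<Longrightarrow> sat D F R \<phi> \<sigma> = sat D F R \<phi> \<tau>"
proof (induction \<phi> arbitrary: \<sigma> \<tau>)
  case (Eq s t) then show ?case using evt_cong[of s \<sigma> \<tau> F] evt_cong[of t \<sigma> \<tau> F] by simp
next
  case (Rel r ts)
  then have "\<forall>x\<in>set ts. evt F \<sigma> x = evt F \<tau> x" using evt_cong by (metis UN_I vars.simps(2))
  then have "map (evt F \<sigma>) ts = map (evt F \<tau>) ts" by (simp only: map_eq_conv)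
  then show ?case by (simp only: sat.simps)
next
  case (Neg \<phi>) then show ?case by simp
next
  case (Conj \<phi> \<psi>)
  have "sat D F R \<phi> \<sigma> = sat D F R \<phi> \<tau>" using Conj by (intro Conj.IH(1)) auto
  moreover have "sat D F R \<psi> \<sigma> = sat D F R \<psi> \<tau>" using Conj by (intro Conj.IH(2)) auto
  ultimately show ?case by simp
next
  case (Ex n \<phi>)
  have "\<And>a. sat D F R \<phi> (\<sigma>(n := a)) = sat D F R \<phi> (\<tau>(n := a))"
    using Ex by (intro Ex.IH) auto
  then show ?case by simp
qed

definition fresh_var :: "('f, 'r) fm \<Rightarrow> nat" where
  "fresh_var \<phi> = Suc (Max (insert 0 (vars \<phi>)))"

lemma fresh_var_notin:
  assumes "fresh_var \<phi> \<le> i"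
  shows "i \<notin> vars \<phi>"
proof
  assume "i \<in> vars \<phi>"
  then have "i \<le> Max (insert 0 (vars \<phi>))" using finite_vars[of \<phi>] by simp
  then show False using assms unfolding fresh_var_def by simp
qed

lemma fresh_var_notin_vars [simp]: "fresh_var \<phi> \<notin> vars \<phi>" "Suc (fresh_var \<phi>) \<notin> vars \<phi>"
  by (simp_all add: fresh_var_notin)

lemma fresh_var_neq_0 [simp]: "fresh_var \<phi> \<noteq> 0"
  unfolding fresh_var_def by simp

locale o_minimal_expansion =
  fixes F :: "'f \<Rightarrow> ('a::linordered_field) list \<Rightarrow> 'a"
    and R :: "'r \<Rightarrow> 'a list \<Rightarrow> bool"
    and lt :: 'r
  assumes R_lt: "\<And>a b. R lt [a, b] \<longleftrightarrow> a < b"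
    and o_min: "o_minimal F R"
begin

definition defset :: "('f, 'r) fm \<Rightarrow> (nat \<Rightarrow> 'a) \<Rightarrow> 'a set" where
  "defset \<phi> \<sigma> = {a. sat UNIV F R \<phi> (\<sigma>(0 := a))}"

definition definable :: "(nat \<Rightarrow> 'a) \<Rightarrow> 'a set \<Rightarrow> bool" where
  "definable \<sigma> S \<longleftrightarrow> (\<exists>\<phi>. S = defset \<phi> \<sigma>)"

lemma definable_Union_pieces:
  assumes "definable \<sigma> S"
  obtains C where "finite C" "\<forall>P\<in>C. piece P" "S = \<Union>C"
proof -
  obtain \<phi> where "S = defset \<phi> \<sigma>" using assms unfolding definable_def by blast
  with o_min show ?thesis using that unfolding defset_def o_minimal_def piece_def by metis
qed

lemma definable_Compl:
  assumes "definable \<sigma> S"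
  shows "definable \<sigma> (- S)"
proof -
  obtain \<phi> where "S = defset \<phi> \<sigma>" using assms unfolding definable_def by blast
  then have "- S = defset (Neg \<phi>) \<sigma>" unfolding defset_def by auto
  then show ?thesis unfolding definable_def by blast
qed

lemma definable_Int:
  assumes "definable \<sigma> S" "definable \<sigma> T"
  shows "definable \<sigma> (S \<inter> T)"
proof -
  obtain \<phi> \<psi> where "S = defset \<phi> \<sigma>" "T = defset \<psi> \<sigma>" using assms unfolding definable_def by blast
  then have "S \<inter> T = defset (Conj \<phi> \<psi>) \<sigma>" unfolding defset_def by auto
  then show ?thesis unfolding definable_def by blast
qed

lemma definable_ex_greater:
  assumes "definable \<sigma> S"
  shows "definable \<sigma> {y. \<exists>z\<in>S. y < z}"
proof -
  obtain \<phi> where S: "S = defset \<phi> \<sigma>" using assms unfolding definable_def by blast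
  define k where "k = fresh_var \<phi>"
  have k: "k \<noteq> 0" "k \<notin> vars \<phi>" unfolding k_def by simp_all
  have irrelevant: "sat UNIV F R \<phi> (\<sigma>(k := w, 0 := z)) = sat UNIV F R \<phi> (\<sigma>(0 := z))" for w z
    by (rule sat_cong) (use k in auto)
  \<comment> \<open>\<open>Var k\<close> saves the value of \<open>Var 0\<close> before the inner quantifier rebinds it.\<close>
  have "{y. \<exists>z\<in>S. y < z} =
      defset (Ex k (Conj (Eq (Var k) (Var 0)) (Ex 0 (Conj \<phi> (Rel lt [Var k, Var 0]))))) \<sigma>"
    unfolding S defset_def using k by (simp add: irrelevant R_lt)
  then show ?thesis unfolding definable_def by blast
qed

lemma definable_ex_less:
  assumes "definable \<sigma> S"
  shows "definable \<sigma> {y. \<exists>z\<in>S. z < y}"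
proof -
  obtain \<phi> where S: "S = defset \<phi> \<sigma>" using assms unfolding definable_def by blast
  define k where "k = fresh_var \<phi>"
  have k: "k \<noteq> 0" "k \<notin> vars \<phi>" unfolding k_def by simp_all
  have irrelevant: "sat UNIV F R \<phi> (\<sigma>(k := w, 0 := z)) = sat UNIV F R \<phi> (\<sigma>(0 := z))" for w z
    by (rule sat_cong) (use k in auto)
  have "{y. \<exists>z\<in>S. z < y} =
      defset (Ex k (Conj (Eq (Var k) (Var 0)) (Ex 0 (Conj \<phi> (Rel lt [Var 0, Var k]))))) \<sigma>"
    unfolding S defset_def using k by (simp add: irrelevant R_lt)
  then show ?thesis unfolding definable_def by blast
qed

lemma definable_order_interior:
  assumes "definable \<sigma> S"
  shows "definable \<sigma> (order_interior S)"
proof -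
  obtain \<phi> where S: "S = defset \<phi> \<sigma>" using assms unfolding definable_def by blast
  define l where "l = fresh_var \<phi>"
  define u where "u = Suc l"
  have lu: "l \<noteq> 0" "u \<noteq> 0" "l \<noteq> u" "l \<notin> vars \<phi>" "u \<notin> vars \<phi>"
    unfolding u_def l_def by simp_all
  have irrelevant:
    "sat UNIV F R \<phi> (\<sigma>(l := a, u := b, 0 := z)) = sat UNIV F R \<phi> (\<sigma>(0 := z))" for a b z
    by (rule sat_cong) (use lu in auto)
  have "defset (Ex l (Ex u (Conj (Rel lt [Var l, Var 0]) (Conj (Rel lt [Var 0, Var u])
        (Neg (Ex 0 (Conj (Rel lt [Var l, Var 0]) (Conj (Rel lt [Var 0, Var u]) (Neg \<phi>))))))))) \<sigma> =
      {y. \<exists>a b. a < y \<and> y < b \<and> \<not> (\<exists>z. a < z \<and> z < b \<and> z \<notin> S)}"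
    unfolding S defset_def using lu by (simp add: irrelevant R_lt)
  also have "\<dots> = order_interior S"
  proof -
    have "(\<not> (\<exists>z. a < z \<and> z < b \<and> z \<notin> S)) \<longleftrightarrow> {a<..<b} \<subseteq> S" for a b by auto
    then show ?thesis unfolding order_interior_def by simp
  qed
  finally show ?thesis unfolding definable_def by blast
qed

lemma definable_order_frontier: "definable \<sigma> S \<Longrightarrow> definable \<sigma> (order_frontier S)"
  unfolding order_frontier_def Compl_Un
  by (intro definable_Int definable_Compl definable_order_interior)

lemma definable_with_atLeast:
  assumes "definable \<sigma> S"
  obtains \<tau> where "definable \<tau> S" "definable \<tau> {a..}"
proof -
  obtain \<phi> where S: "S = defset \<phi> \<sigma>" using assms unfolding definable_def by blast
  define k where "k = fresh_var \<phi>"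
  have k: "k \<noteq> 0" "k \<notin> vars \<phi>" unfolding k_def by simp_all
  have "S = defset \<phi> (\<sigma>(k := a))"
    unfolding S defset_def by (intro Collect_cong sat_cong) (use k in auto)
  moreover have "{a..} = defset (Neg (Rel lt [Var 0, Var k])) (\<sigma>(k := a))"
    unfolding defset_def using k by (auto simp: R_lt)
  ultimately show ?thesis using that unfolding definable_def by blast
qed

lemma finite_order_frontier:
  assumes "definable \<sigma> S"
  shows "finite (order_frontier S)"
proof -
  obtain C where C: "finite C" "\<forall>P\<in>C. piece P" "S = \<Union>C"
    using definable_Union_pieces[OF assms] .
  obtain D where D: "finite D" "\<forall>P\<in>D. piece P" "order_frontier S = \<Union>D"
    using definable_Union_pieces[OF definable_order_frontier[OF assms]] .
  have "\<not> {l<..<u} \<subseteq> \<Union>D" if "l < u" for l u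
    using order_frontier_without_intervals[OF _ that] Union_pieces_locally_constant_right[OF C(1,2)] C(3) D(3)
    by metis
  then show ?thesis using finite_Union_pieces_without_intervals[OF D(1,2)] D(3) by metis
qed

lemma definable_meets_elem_sub:
  assumes E: "elem_sub F R E" "range \<sigma> \<subseteq> E" and "definable \<sigma> S" "y \<in> S"
  obtains e where "e \<in> E" "e \<in> S"
proof -
  obtain \<phi> where S: "S = defset \<phi> \<sigma>" using assms(3) unfolding definable_def by blast
  have "sat UNIV F R (Ex 0 \<phi>) \<sigma>" using assms(4) unfolding S defset_def by auto
  then have "sat E F R (Ex 0 \<phi>) \<sigma>" using E unfolding elem_sub_def by blast
  then obtain e where "e \<in> E" "sat E F R \<phi> (\<sigma>(0 := e))" by auto
  moreover have "range (\<sigma>(0 := e)) \<subseteq> E" using E(2) \<open>e \<in> E\<close> by auto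
  ultimately have "sat UNIV F R \<phi> (\<sigma>(0 := e))" using E(1) unfolding elem_sub_def by blast
  then show thesis using that \<open>e \<in> E\<close> unfolding S defset_def by blast
qed

lemma finite_definable_subset_elem_sub:
  assumes E: "elem_sub F R E" "range \<sigma> \<subseteq> E" and "definable \<sigma> S" "finite S"
  shows "S \<subseteq> E"
  using assms(3,4)
proof (induction "card S" arbitrary: S rule: less_induct)
  case less
  show ?case
  proof (cases "S = {}")
    case False
    define m where "m = Max S"
    have m: "m \<in> S" "\<And>z. z \<in> S \<Longrightarrow> z \<le> m"
      unfolding m_def using less.prems False by simp_all
    have "S \<inter> - {y. \<exists>z\<in>S. y < z} = {m}"
    proof (intro equalityI subsetI)
      fix y assume "y \<in> S \<inter> - {y. \<exists>z\<in>S. y < z}"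
      then have "y \<in> S" "\<not> y < m" using m(1) by auto
      then show "y \<in> {m}" using m(2) by (simp add: order.antisym not_less)
    qed (use m leD in blast)
    moreover have "definable \<sigma> (S \<inter> - {y. \<exists>z\<in>S. y < z})"
      using less.prems by (intro definable_Int definable_Compl definable_ex_greater)
    ultimately have "m \<in> E"
      using definable_meets_elem_sub[OF E] by (metis singletonD singletonI)
    have "S \<inter> {y. \<exists>z\<in>S. y < z} = S - {m}"
    proof (intro equalityI subsetI)
      fix y assume "y \<in> S \<inter> {y. \<exists>z\<in>S. y < z}"
      then obtain z where "y \<in> S" "z \<in> S" "y < z" by blast
      then show "y \<in> S - {m}" using m(2)[of z] by auto
    next
      fix y assume "y \<in> S - {m}"
      then have "y \<in> S" "y < m" using m(2) by (auto simp: less_le)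
      then show "y \<in> S \<inter> {y. \<exists>z\<in>S. y < z}" using m(1) by blast
    qed
    moreover have "definable \<sigma> (S \<inter> {y. \<exists>z\<in>S. y < z})"
      using less.prems by (intro definable_Int definable_ex_greater)
    moreover have "card (S - {m}) < card S"
      using card_Diff1_less[OF less.prems(2) m(1)] .
    ultimately have "S - {m} \<subseteq> E"
      using less.hyps less.prems by (metis finite_Diff)
    with \<open>m \<in> E\<close> show ?thesis by blast
  qed simp
qed

lemma elem_sub_meets_segment_of_change:
  assumes E: "elem_sub F R E" "range \<sigma> \<subseteq> E"
    and "definable \<sigma> S" "a \<in> S" "b \<notin> S" "a < b"
  obtains e where "e \<in> E" "a \<le> e" "e \<le> b"
proof -
  \<comment> \<open>\<open>a\<close> need not lie in \<open>E\<close>: the set \<open>L\<close> below is only used through o-minimality.\<close>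
  obtain \<tau> where S: "definable \<tau> S" and "definable \<tau> {a..}"
    using definable_with_atLeast[OF assms(3)] .
  define X where "X = {a..} \<inter> - S"
  define L where "L = {t. {a..t} \<subseteq> S}"
  have L: "L = - X \<inter> - {t. \<exists>s\<in>X. s < t}"
  proof (rule set_eqI)
    fix t
    have "t \<notin> L \<longleftrightarrow> (\<exists>s\<in>X. s \<le> t)" unfolding L_def X_def by auto
    also have "\<dots> \<longleftrightarrow> t \<in> X \<or> (\<exists>s\<in>X. s < t)" by (auto simp: le_less)
    finally show "t \<in> L \<longleftrightarrow> t \<in> - X \<inter> - {t. \<exists>s\<in>X. s < t}" by blast
  qed
  have "definable \<tau> X"
    unfolding X_def using S \<open>definable \<tau> {a..}\<close> by (intro definable_Int definable_Compl)
  then have "definable \<tau> L"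
    unfolding L by (intro definable_Int definable_Compl definable_ex_less)
  then obtain C where C: "finite C" "\<forall>P\<in>C. piece P" "L = \<Union>C"
    using definable_Union_pieces by blast
  have "a \<in> L" using assms(4) unfolding L_def by auto
  have "t \<le> b" if "t \<in> L" for t
  proof (rule ccontr)
    assume "\<not> t \<le> b"
    then have "b \<in> {a..t}" using assms(6) by auto
    then show False using that assms(5) unfolding L_def by blast
  qed
  then obtain p where "is_lub L p"
    using Union_pieces_has_lub[OF C(1,2)] C(3) \<open>a \<in> L\<close> by blast
  then have p: "a \<le> p" "p \<le> b" "p \<in> order_frontier S"
    using lub_of_initial_run_in_order_frontier[OF assms(4-6)] unfolding L_def by blast+
  have "order_frontier S \<subseteq> E"
    using finite_definable_subset_elem_sub[OF E definable_order_frontier finite_order_frontier]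
      assms(3) by blast
  then show thesis using that p by blast
qed

lemma realizes_type_in_if_not_separated:
  assumes E: "elem_sub F R E" and "c \<in> E1"
    and not_separated: "\<not> (\<exists>e\<in>E. min c x \<le> e \<and> e \<le> max c x)"
  shows "realizes_type_in F R E E1 x"
proof -
  have "sat UNIV F R \<phi> (\<sigma>(0 := x)) \<longleftrightarrow> sat UNIV F R \<phi> (\<sigma>(0 := c))" if \<sigma>: "range \<sigma> \<subseteq> E" for \<phi> \<sigma>
  proof (rule ccontr)
    define S where "S = defset \<phi> \<sigma>"
    have S: "definable \<sigma> S" unfolding S_def definable_def by blast
    assume "\<not> ?thesis"
    then have change: "x \<in> S \<longleftrightarrow> c \<notin> S" unfolding S_def defset_def by auto
    then have "c \<noteq> x" by auto
    then have "min c x < max c x" by (cases "c < x") (auto simp: min_def max_def)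
    moreover have "min c x \<in> S \<and> max c x \<notin> S \<or> min c x \<in> - S \<and> max c x \<notin> - S"
      using change by (auto simp: min_def max_def)
    ultimately obtain e where "e \<in> E" "min c x \<le> e" "e \<le> max c x"
      using elem_sub_meets_segment_of_change[OF E \<sigma> S] elem_sub_meets_segment_of_change[OF E \<sigma> definable_Compl[OF S]]
      by metis
    then show False using not_separated by blast
  qed
  then show ?thesis unfolding realizes_type_in_def using assms(2) by blast
qed

end

theorem lemma3p19:
  fixes F :: "'f \<Rightarrow> ('a::linordered_field) list \<Rightarrow> 'a"
    and R :: "'r \<Rightarrow> 'a list \<Rightarrow> bool"
    and Op :: "'a set" and E E1 :: "'a set" and x :: 'a
  assumes "expands_orf F R" and "real_closed TYPE('a)" and "o_minimal F R"
    and "T_convex F R Op"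
    and "elem_sub F R E" and "elem_sub F R E1" and "E \<subseteq> E1" and "E1 \<noteq> UNIV"
    and "\<not> E \<subseteq> Op"
    and "x \<notin> E"
    and "\<not> realizes_type_in F R E E1 x"
  shows "(weakly_immediate Op E x \<longleftrightarrow> weakly_immediate Op E1 x) \<and>
         (weakly_immediate Op E x \<longrightarrow>
            same_cofinality (val_ord Op) (val_set Op x E) (val_ord Op) (val_set Op x E1))"
proof -
  obtain lt where "\<And>a b. R lt [a, b] \<longleftrightarrow> a < b"
    using assms(1) unfolding expands_orf_def by blast
  then interpret o_minimal_expansion F R lt
    using assms(3) by unfold_locales
  have Op: "convex_subring Op"
    using assms(4) unfolding T_convex_def by blast
  have "x \<notin> E1"
    using assms(11) unfolding realizes_type_in_def by blast
  moreover have "\<exists>e\<in>E. min c x \<le> e \<and> e \<le> max c x" if "c \<in> E1" for c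
    using realizes_type_in_if_not_separated[OF assms(5) that] assms(11) by blast
  ultimately show ?thesis
    using weakly_immediate_iff_and_same_cofinality_of_between[OF Op assms(7)] by blast
qed

end
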